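(* Let $n$ be a positive integer, $S\subseteq S_n$ a subset containing the identity, $G$ the subgroup generated by $S$, $p\ne q$ primes, and $c\in G$ an element of order $p$. Call a configuration $x\in\mathbb{Z}_q^n$ semi-homogeneous if for every $g\in G$ the coordinates $x_{g(1)},x_{gc(1)},x_{gc^2(1)},\dots,x_{gc^{p-1}(1)}$ are all equal. If $x$ is not semi-homogeneous, then there is no move $y\in\mathbb{Z}_q^n$ such that for every $\sigma\in S$ the configuration $x'+y$ is semi-homogeneous, where $x'$ is defined by $x'_{\sigma(i)}=x_i$.
   Context: Permutations in $S_n$ are composed as functions, $(gh)(i)=g(h(i))$. *)

theory Defs
  imports "HOL-Algebra.Sym_Groups" "HOL-Algebra.Multiplicative_Group" "HOL-Number_Theory.Cong"
begin

text \<open>Configurations in Z_q^n are modelled as functions nat => int, read modulo q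
  (only coordinates 1..n matter). Permutations are elements of sym_group n
  (permutations of {1..n}, composed as functions).\<close>

definition semi_homogeneous ::
  "nat \<Rightarrow> (nat \<Rightarrow> nat) set \<Rightarrow> (nat \<Rightarrow> nat) \<Rightarrow> nat \<Rightarrow> (nat \<Rightarrow> int) \<Rightarrow> bool" where
  "semi_homogeneous q G c p x \<longleftrightarrow>
     (\<forall>g\<in>G. \<forall>k<p. [x (g ((c ^^ k) 1)) = x (g 1)] (mod int q))"

end

theory Submission
  imports Defs
begin

text \<open>Write \<open>\<Delta>\<^sub>h x = x \<circ> h - x\<close> (\<open>shift_diff x h\<close>). Moving by \<open>\<sigma>\<close> and by \<open>id\<close> with the same \<open>y\<close> and subtracting
  shows that \<open>\<Delta>\<^sub>\<sigma>\<^sub>\<inverse> x\<close> is semi-homogeneous for every \<open>\<sigma> \<in> S\<close>. Semi-homogeneous configurations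
  form a group stable under precomposition with elements of \<open>G\<close>, and \<open>\<Delta>\<close> satisfies the cocycle
  rule \<open>\<Delta>\<^sub>g\<^sub>h x = \<Delta>\<^sub>g x \<circ> h + \<Delta>\<^sub>h x\<close>, so \<open>\<Delta>\<^sub>h x\<close> is semi-homogeneous for all \<open>h \<in> G\<close>. Applied to
  \<open>\<Delta>\<^sub>g\<^sub>c x - \<Delta>\<^sub>g x\<close> along the \<open>c\<close>-orbit of \<open>1\<close>, this makes \<open>j \<mapsto> x (g (c\<^sup>j 1))\<close> an arithmetic
  progression mod \<open>q\<close>; it has period \<open>p\<close>, and \<open>p\<close> is invertible mod \<open>q\<close>, so it is constant.\<close>

definition shift_diff :: "(nat \<Rightarrow> int) \<Rightarrow> (nat \<Rightarrow> nat) \<Rightarrow> nat \<Rightarrow> int" where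
  "shift_diff x h = (\<lambda>i. x (h i) - x i)"

lemma shift_diff_comp:
  "shift_diff x (h1 \<circ> h2) = (\<lambda>i. shift_diff x h1 (h2 i) + shift_diff x h2 i)"
  unfolding shift_diff_def by auto

lemma sym_group_pow_eq_funpow: "c [^]\<^bsub>sym_group n\<^esub> (m::nat) = c ^^ m"
proof (induction m)
  case 0 then show ?case by (simp add: sym_group_one)
next
  case (Suc m) then show ?case
    by (simp add: sym_group_mult funpow_Suc_right del: funpow.simps)
qed

lemma semi_homogeneous_zero: "semi_homogeneous q G c p (\<lambda>i. 0)"
  unfolding semi_homogeneous_def by simp

lemma semi_homogeneous_add:
  assumes "semi_homogeneous q G c p a" "semi_homogeneous q G c p b"
  shows "semi_homogeneous q G c p (\<lambda>i. a i + b i)"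
  using assms unfolding semi_homogeneous_def by (meson cong_add)

lemma semi_homogeneous_diff:
  assumes "semi_homogeneous q G c p a" "semi_homogeneous q G c p b"
  shows "semi_homogeneous q G c p (\<lambda>i. a i - b i)"
  using assms unfolding semi_homogeneous_def by (meson cong_diff)

lemma semi_homogeneous_uminus:
  assumes "semi_homogeneous q G c p a"
  shows "semi_homogeneous q G c p (\<lambda>i. - a i)"
  using assms unfolding semi_homogeneous_def by (meson cong_minus_minus_iff)

lemma semi_homogeneous_comp:
  assumes "semi_homogeneous q G c p a" and "\<And>g. g \<in> G \<Longrightarrow> h \<circ> g \<in> G"
  shows "semi_homogeneous q G c p (\<lambda>i. a (h i))"
  unfolding semi_homogeneous_def
proof (intro ballI allI impI)
  fix g k assume "g \<in> G" "k < p"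
  then show "[a (h (g ((c ^^ k) 1))) = a (h (g 1))] (mod int q)"
    using assms unfolding semi_homogeneous_def by (metis comp_apply)
qed

lemma semi_homogeneous_comp_generate:
  assumes "semi_homogeneous q (generate (sym_group n) S) c p a"
    and "h \<in> generate (sym_group n) S"
  shows "semi_homogeneous q (generate (sym_group n) S) c p (\<lambda>i. a (h i))"
  using assms(1)
proof (rule semi_homogeneous_comp)
  fix g assume "g \<in> generate (sym_group n) S"
  then show "h \<circ> g \<in> generate (sym_group n) S"
    using generate.eng[OF assms(2)] by (simp add: sym_group_mult)
qed

lemma semi_homogeneous_shift_diff_generate:
  assumes S: "S \<subseteq> carrier (sym_group n)"
    and gens: "\<And>\<sigma>. \<sigma> \<in> S \<Longrightarrow> semi_homogeneous q (generate (sym_group n) S) c p (shift_diff x (inv' \<sigma>))"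
    and h: "h \<in> generate (sym_group n) S"
  shows "semi_homogeneous q (generate (sym_group n) S) c p (shift_diff x h)"
  using h
proof (induction h rule: generate.induct)
  case one
  then show ?case by (simp add: sym_group_one shift_diff_def semi_homogeneous_zero)
next
  case (incl h)
  have "h permutes {1..n}" using incl S sym_group_carrier by blast
  then have "shift_diff x h = (\<lambda>i. - shift_diff x (inv' h) (h i))"
    unfolding shift_diff_def by (simp add: permutes_inverses(2))
  moreover have "semi_homogeneous q (generate (sym_group n) S) c p (\<lambda>i. - shift_diff x (inv' h) (h i))"
    using semi_homogeneous_uminus[OF semi_homogeneous_comp_generate[OF gens[OF incl] generate.incl[OF incl]]] .
  ultimately show ?case by simp
next
  case (inv h)
  then have "inv\<^bsub>sym_group n\<^esub> h = inv' h" using S by auto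
  then show ?case using gens[OF inv] by simp
next
  case (eng h1 h2)
  have "shift_diff x (h1 \<otimes>\<^bsub>sym_group n\<^esub> h2) = (\<lambda>i. shift_diff x h1 (h2 i) + shift_diff x h2 i)"
    by (simp only: sym_group_mult shift_diff_comp)
  then show ?case
    using semi_homogeneous_add[OF semi_homogeneous_comp_generate[OF eng.IH(1) eng.hyps(2)] eng.IH(2)]
    by simp
qed

lemma periodic_arith_progression_cong_const:
  fixes a :: "nat \<Rightarrow> int"
  assumes step: "\<And>j. j < p \<Longrightarrow> [a (Suc j) - a j = a 1 - a 0] (mod m)"
    and period: "a p = a 0" and coprime: "coprime (int p) m" and "k < p"
  shows "[a k = a 0] (mod m)"
proof -
  have lin: "[a j = a 0 + int j * (a 1 - a 0)] (mod m)" if "j \<le> p" for j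
    using that
  proof (induction j)
    case 0 then show ?case by simp
  next
    case (Suc j)
    have "[a (Suc j) = a j + (a 1 - a 0)] (mod m)"
      using step[of j] Suc.prems by (metis add.commute cong_add_lcancel diff_add_cancel Suc_le_lessD)
    also have "[a j + (a 1 - a 0) = a 0 + int j * (a 1 - a 0) + (a 1 - a 0)] (mod m)"
      using Suc by (intro cong_add) auto
    finally show ?case by (simp add: algebra_simps)
  qed
  have "[a 0 + int p * (a 1 - a 0) = a 0 + 0] (mod m)"
    using lin[of p] period by (simp add: cong_sym)
  then have "[int p * (a 1 - a 0) = 0] (mod m)"
    by (simp only: cong_add_lcancel)
  then have "[(a 1 - a 0) * int p = 0 * int p] (mod m)"
    by (metis mult.commute mult_zero_left)
  then have "[a 1 - a 0 = 0] (mod m)"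
    using coprime cong_mult_rcancel by (metis coprime_commute)
  then have "[a 0 + int k * (a 1 - a 0) = a 0 + int k * 0] (mod m)"
    by (intro cong_add cong_mult) auto
  then show ?thesis using lin[of k] \<open>k < p\<close> by (simp add: cong_trans)
qed

lemma semi_homogeneous_if_shift_diffs:
  assumes shifts: "\<And>h. h \<in> G \<Longrightarrow> semi_homogeneous q G c p (shift_diff x h)"
    and G_comp: "\<And>g h. g \<in> G \<Longrightarrow> h \<in> G \<Longrightarrow> g \<circ> h \<in> G"
    and "id \<in> G" "c \<in> G" and "c ^^ p = id" and coprime: "coprime (int p) (int q)"
  shows "semi_homogeneous q G c p x"
  unfolding semi_homogeneous_def
proof (intro ballI allI impI)
  fix g k assume g: "g \<in> G" and "k < p"
  define a where "a j = x (g ((c ^^ j) 1))" for j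
  have diff_sh: "semi_homogeneous q G c p (\<lambda>i. shift_diff x (g \<circ> c) i - shift_diff x g i)"
    using semi_homogeneous_diff shifts G_comp g \<open>c \<in> G\<close> by blast
  have "[a (Suc j) - a j = a 1 - a 0] (mod int q)" if "j < p" for j
  proof -
    have "[shift_diff x (g \<circ> c) ((c ^^ j) 1) - shift_diff x g ((c ^^ j) 1)
          = shift_diff x (g \<circ> c) 1 - shift_diff x g 1] (mod int q)"
      using diff_sh[unfolded semi_homogeneous_def, rule_format, OF \<open>id \<in> G\<close> that] by simp
    then show ?thesis unfolding a_def shift_diff_def by simp
  qed
  moreover have "a p = a 0" unfolding a_def using \<open>c ^^ p = id\<close> by simp
  ultimately have "[a k = a 0] (mod int q)"
    using periodic_arith_progression_cong_const \<open>k < p\<close> coprime by blast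
  then show "[x (g ((c ^^ k) 1)) = x (g 1)] (mod int q)" unfolding a_def by simp
qed

theorem mainTheorem11:
  fixes n p q :: nat and S :: "(nat \<Rightarrow> nat) set" and c :: "nat \<Rightarrow> nat"
    and x :: "nat \<Rightarrow> int"
  assumes "n > 0"
    and "S \<subseteq> carrier (sym_group n)" and "id \<in> S"
    and "prime p" and "prime q" and "p \<noteq> q"
    and "c \<in> generate (sym_group n) S"
    and "group.ord (sym_group n) c = p"
    and "\<not> semi_homogeneous q (generate (sym_group n) S) c p x"
  shows "\<not> (\<exists>y :: nat \<Rightarrow> int. \<forall>\<sigma>\<in>S.
            semi_homogeneous q (generate (sym_group n) S) c p (\<lambda>i. x (inv' \<sigma> i) + y i))"
proof
  let ?G = "generate (sym_group n) S"
  assume "\<exists>y. \<forall>\<sigma>\<in>S. semi_homogeneous q ?G c p (\<lambda>i. x (inv' \<sigma> i) + y i)"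
  then obtain y where y: "\<And>\<sigma>. \<sigma> \<in> S \<Longrightarrow> semi_homogeneous q ?G c p (\<lambda>i. x (inv' \<sigma> i) + y i)"
    by blast
  have "semi_homogeneous q ?G c p (shift_diff x (inv' \<sigma>))" if "\<sigma> \<in> S" for \<sigma>
    using semi_homogeneous_diff[OF y[OF that] y[OF \<open>id \<in> S\<close>]]
    by (simp add: shift_diff_def inv_id)
  then have shifts: "\<And>h. h \<in> ?G \<Longrightarrow> semi_homogeneous q ?G c p (shift_diff x h)"
    using semi_homogeneous_shift_diff_generate assms(2) by blast
  have "?G \<subseteq> carrier (sym_group n)"
    using group.generate_in_carrier[OF sym_group_is_group assms(2)] by blast
  then have "c ^^ p = id"
    using group.pow_ord_eq_1[OF sym_group_is_group] assms(7,8)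
    by (auto simp: sym_group_pow_eq_funpow sym_group_one)
  moreover have "id \<in> ?G" using generate.one[of "sym_group n" S] by (simp add: sym_group_one)
  moreover have "g \<circ> h \<in> ?G" if "g \<in> ?G" "h \<in> ?G" for g h
    using generate.eng[OF that] by (simp add: sym_group_mult)
  moreover have "coprime (int p) (int q)" using assms(4-6) primes_coprime by auto
  ultimately have "semi_homogeneous q ?G c p x"
    using semi_homogeneous_if_shift_diffs[OF shifts] assms(7) by blast
  with assms(9) show False by contradiction
qed

end
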